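(* Let $\mathcal{X}\subseteq\mathbb{R}^n$ and let $h = p_k \circ \dots \circ p_1:\mathbb{R}^n \to \mathcal{Y}$ be a model, where each layer $p_r:\mathbb{R}^{n^{r-1}}\to\mathbb{R}^{n^r}$ ($n^0=n$). Let $g:\mathbb{R}^n\times\mathcal{Y} \to G$ be an explanation function (EF). For $m\in\{1,\dots,k\}$ write $f_m := p_m \circ \dots \circ p_1$. Suppose that for some $i \in \{1,\dots,k\}$, $f_i$ is a $\beta(\epsilon)$-consistent representation with respect to $g$, for a function $\beta:(0,\infty)\to[0,\infty)$. Let $j$ with $i\le j\le k$, and assume that $p_r$ is an $l_r$-Lipschitz function for every $r \in \{i+1,\dots,j\}$. Then $f_j$ is $\hat{\beta}(\epsilon)$-consistent with respect to $g$, where $\hat{\beta}(\epsilon) := \beta(\epsilon) \cdot \prod^{j}_{r=i+1} l_r$.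
   Context: $G$ is a set of explanations equipped with a norm (or distance) written $|\cdot|$; the spaces $\mathbb{R}^{d}$ are also equipped with a norm $|\cdot|$, and Lipschitz continuity is with respect to these norms. For a model $h=c\circ f$ with representation $f:\mathcal{X}\to\mathbb{R}^d$ and an EF $g$, $f$ is called a $\beta(\epsilon)$-consistent representation with respect to $g$ if for every $\epsilon\in(0,\infty)$ and all $x_1,x_2\in\mathcal{X}$: $|g(x_1,h(x_1))-g(x_2,h(x_2))|\le\epsilon$ implies $|f(x_1)-f(x_2)|\le\beta(\epsilon)$. For the layered model, $f_m$ is regarded as the representation with $c=p_k\circ\dots\circ p_{m+1}$. *)

theory Defs
  imports "HOL-Analysis.Analysis"
begin

text \<open>Vectors of R^d are represented as functions nat => real vanishing outside {..<d}.\<close>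
definition vec_space :: "nat \<Rightarrow> (nat \<Rightarrow> real) set" where
  "vec_space d = {x. \<forall>i\<ge>d. x i = 0}"

definition is_norm_on :: "(nat \<Rightarrow> real) set \<Rightarrow> ((nat \<Rightarrow> real) \<Rightarrow> real) \<Rightarrow> bool" where
  "is_norm_on V nrm \<longleftrightarrow>
     (\<forall>x\<in>V. 0 \<le> nrm x \<and> (nrm x = 0 \<longleftrightarrow> (\<forall>t. x t = 0))) \<and>
     (\<forall>x\<in>V. \<forall>c::real. nrm (\<lambda>t. c * x t) = \<bar>c\<bar> * nrm x) \<and>
     (\<forall>x\<in>V. \<forall>y\<in>V. nrm (\<lambda>t. x t + y t) \<le> nrm x + nrm y)"

primrec comp_layers :: "(nat \<Rightarrow> 'a \<Rightarrow> 'a) \<Rightarrow> nat \<Rightarrow> 'a \<Rightarrow> 'a" where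
  "comp_layers p 0 = id"
| "comp_layers p (Suc m) = p (Suc m) \<circ> comp_layers p m"

definition lipschitz_between ::
  "(nat \<Rightarrow> real) set \<Rightarrow> ((nat \<Rightarrow> real) \<Rightarrow> real) \<Rightarrow> ((nat \<Rightarrow> real) \<Rightarrow> real)
   \<Rightarrow> real \<Rightarrow> ((nat \<Rightarrow> real) \<Rightarrow> (nat \<Rightarrow> real)) \<Rightarrow> bool" where
  "lipschitz_between A na nb l p \<longleftrightarrow>
     0 \<le> l \<and> (\<forall>x\<in>A. \<forall>y\<in>A. nb (\<lambda>t. p x t - p y t) \<le> l * na (\<lambda>t. x t - y t))"

definition consistent_repr ::
  "'x set \<Rightarrow> ('x \<Rightarrow> 'y \<Rightarrow> 'g) \<Rightarrow> ('x \<Rightarrow> 'y) \<Rightarrow> ('g \<Rightarrow> 'g \<Rightarrow> real)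
   \<Rightarrow> ((nat \<Rightarrow> real) \<Rightarrow> real) \<Rightarrow> ('x \<Rightarrow> nat \<Rightarrow> real) \<Rightarrow> (real \<Rightarrow> real) \<Rightarrow> bool" where
  "consistent_repr X g h dG nf f \<beta> \<longleftrightarrow>
     (\<forall>\<epsilon>>0. \<forall>x1\<in>X. \<forall>x2\<in>X.
        dG (g x1 (h x1)) (g x2 (h x2)) \<le> \<epsilon> \<longrightarrow> nf (\<lambda>t. f x1 t - f x2 t) \<le> \<beta> \<epsilon>)"

end

theory Submission
  imports Defs
begin

text \<open>Consistency propagates along the layers: if the distance of representations in layer
  \<open>j\<close> is controlled by \<open>c\<close> times the distance in layer \<open>i\<close>, then a \<open>\<beta>\<close>-consistent
  representation in layer \<open>i\<close> yields a \<open>c \<beta>\<close>-consistent one in layer \<open>j\<close>. Composing the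
  Lipschitz bounds of the layers \<open>i+1, \<dots>, j\<close> gives such a control with
  \<open>c = l\<^sub>i\<^sub>+\<^sub>1 \<cdot> \<dots> \<cdot> l\<^sub>j\<close>.\<close>

lemma consistent_repr_scale:
  assumes "consistent_repr X g h dG nf f \<beta>"
    and "c \<ge> 0"
    and "\<And>x y. x \<in> X \<Longrightarrow> y \<in> X \<Longrightarrow> nf' (\<lambda>t. f' x t - f' y t) \<le> c * nf (\<lambda>t. f x t - f y t)"
  shows "consistent_repr X g h dG nf' f' (\<lambda>\<epsilon>. \<beta> \<epsilon> * c)"
  unfolding consistent_repr_def
proof (intro allI impI ballI)
  fix \<epsilon> :: real and x y
  assume "\<epsilon> > 0" "x \<in> X" "y \<in> X" "dG (g x (h x)) (g y (h y)) \<le> \<epsilon>"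
  then have "nf (\<lambda>t. f x t - f y t) \<le> \<beta> \<epsilon>"
    using assms(1) unfolding consistent_repr_def by blast
  then have "c * nf (\<lambda>t. f x t - f y t) \<le> \<beta> \<epsilon> * c"
    using \<open>c \<ge> 0\<close> by (simp add: mult.commute mult_left_mono)
  with assms(3) \<open>x \<in> X\<close> \<open>y \<in> X\<close> show "nf' (\<lambda>t. f' x t - f' y t) \<le> \<beta> \<epsilon> * c"
    by (meson order_trans)
qed

lemma comp_layers_in_space:
  assumes "\<And>r. r \<in> {1..m} \<Longrightarrow> p r ` V (r - 1) \<subseteq> V r"
    and "x \<in> V 0"
  shows "comp_layers p m x \<in> V m"
  using assms(1)
proof (induction m)
  case 0
  then show ?case using \<open>x \<in> V 0\<close> by simp
next
  case (Suc m)
  then have "comp_layers p m x \<in> V m" by simp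
  moreover have "p (Suc m) ` V m \<subseteq> V (Suc m)"
    using Suc.prems[of "Suc m"] by simp
  ultimately show ?case by auto
qed

lemma lipschitz_between_nonneg: "lipschitz_between A na nb l p \<Longrightarrow> 0 \<le> l"
  unfolding lipschitz_between_def by simp

lemma comp_layers_dist_le:
  assumes "i \<le> m"
    and lip: "\<And>r. r \<in> {i+1..m} \<Longrightarrow> lipschitz_between (V (r - 1)) (nrm (r - 1)) (nrm r) (l r) (p r)"
    and x: "\<And>r. r \<in> {i..<m} \<Longrightarrow> comp_layers p r x \<in> V r"
    and y: "\<And>r. r \<in> {i..<m} \<Longrightarrow> comp_layers p r y \<in> V r"
  shows "nrm m (\<lambda>t. comp_layers p m x t - comp_layers p m y t)
           \<le> (\<Prod>r\<in>{i+1..m}. l r) * nrm i (\<lambda>t. comp_layers p i x t - comp_layers p i y t)"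
  using assms
proof (induction m rule: dec_induct)
  case base
  then show ?case by simp
next
  case (step m)
  let ?d = "\<lambda>r. nrm r (\<lambda>t. comp_layers p r x t - comp_layers p r y t)"
  have lip_m: "lipschitz_between (V m) (nrm m) (nrm (Suc m)) (l (Suc m)) (p (Suc m))"
    using step.prems(1)[of "Suc m"] step.hyps by simp
  have "?d (Suc m) \<le> l (Suc m) * ?d m"
    using lip_m step.prems(2,3)[of m] step.hyps unfolding lipschitz_between_def by simp
  also have "\<dots> \<le> l (Suc m) * ((\<Prod>r\<in>{i+1..m}. l r) * ?d i)"
    using step lipschitz_between_nonneg[OF lip_m] by (simp add: mult_left_mono)
  also have "\<dots> = (\<Prod>r\<in>{i+1..Suc m}. l r) * ?d i"
    using step.hyps by (simp add: prod.nat_ivl_Suc' mult.commute mult.left_commute)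
  finally show ?case .
qed

theorem theorem1:
  fixes X :: "(nat \<Rightarrow> real) set"
    and dims :: "nat \<Rightarrow> nat"
    and nrm :: "nat \<Rightarrow> (nat \<Rightarrow> real) \<Rightarrow> real"
    and p :: "nat \<Rightarrow> (nat \<Rightarrow> real) \<Rightarrow> (nat \<Rightarrow> real)"
    and g :: "(nat \<Rightarrow> real) \<Rightarrow> (nat \<Rightarrow> real) \<Rightarrow> 'g"
    and dG :: "'g \<Rightarrow> 'g \<Rightarrow> real"
    and \<beta> :: "real \<Rightarrow> real"
    and l :: "nat \<Rightarrow> real"
    and n k i j :: nat
  assumes dim0: "dims 0 = n"
    and X_sub: "X \<subseteq> vec_space n"
    and norms: "\<And>d. is_norm_on (vec_space d) (nrm d)"
    and layers: "\<And>r. r \<in> {1..k} \<Longrightarrow> p r ` vec_space (dims (r - 1)) \<subseteq> vec_space (dims r)"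
    and beta_nonneg: "\<And>\<epsilon>. \<epsilon> > 0 \<Longrightarrow> \<beta> \<epsilon> \<ge> 0"
    and i_range: "i \<in> {1..k}"
    and cons_i: "consistent_repr X g (comp_layers p k) dG (nrm (dims i)) (comp_layers p i) \<beta>"
    and ij: "i \<le> j" "j \<le> k"
    and lip: "\<And>r. r \<in> {i+1..j} \<Longrightarrow>
               lipschitz_between (vec_space (dims (r - 1))) (nrm (dims (r - 1))) (nrm (dims r)) (l r) (p r)"
  shows "consistent_repr X g (comp_layers p k) dG (nrm (dims j)) (comp_layers p j)
           (\<lambda>\<epsilon>. \<beta> \<epsilon> * (\<Prod>r\<in>{i+1..j}. l r))"
proof (rule consistent_repr_scale[OF cons_i])
  show "0 \<le> (\<Prod>r\<in>{i+1..j}. l r)"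
    using lip by (intro prod_nonneg) (blast intro: lipschitz_between_nonneg)
  have in_space: "comp_layers p r x \<in> vec_space (dims r)" if "x \<in> X" "r \<le> k" for x r
    using comp_layers_in_space[where V = "\<lambda>r. vec_space (dims r)"] layers that X_sub dim0
    by (metis atLeastAtMost_iff order_trans subsetD)
  show "nrm (dims j) (\<lambda>t. comp_layers p j x t - comp_layers p j y t)
          \<le> (\<Prod>r\<in>{i+1..j}. l r) * nrm (dims i) (\<lambda>t. comp_layers p i x t - comp_layers p i y t)"
    if "x \<in> X" "y \<in> X" for x y
    using comp_layers_dist_le[where V = "\<lambda>r. vec_space (dims r)" and nrm = "\<lambda>r. nrm (dims r)"]
      ij lip in_space that by simp
qed

end
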